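(* Let $k>1$ be an odd integer and let $n_k=\lceil \log_2 k\rceil$. Then for every integer $x\in\{0,1,\ldots,k-1\}$ there exist $n_k$ pairwise distinct integers $i_1,\ldots,i_{n_k}\in\{0,1,\ldots,n_k+k-2\}$ such that $$x\equiv 2^{i_1}+2^{i_2}+\cdots+2^{i_{n_k}}\pmod k.$$ In other words, $x$ is congruent modulo $k$ to a sum of exactly $n_k$ distinct elements of $D=\{2^i: i=0,1,\ldots,n_k+k-2\}$.
   Context: $n_k=\lceil\log_2 k\rceil$ is the smallest integer $n$ with $k\le 2^{n}$. *)

theory Defs
  imports Main "HOL-Number_Theory.Cong"
begin

(* n_k = ceil(log2 k): the smallest natural n with k <= 2^n *)
definition nk :: "nat \<Rightarrow> nat" where
  "nk k = (LEAST n. k \<le> 2 ^ n)"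

end

theory Submission
  imports Defs "HOL-Number_Theory.Number_Theory"
begin

(*
  Let n = nk k = m + 1, so that k < 2^n (k is odd and n > 0).
  1. Signed binary digits: every integer t with |t| < 2^m equals
     sum_{i in A} 2^i - sum_{i in B} 2^i for sets A, B of digit positions
     in {..m} of equal size (balanced representation).  This is proved by
     induction on m, simultaneously with the statement that every t with
     0 < t <= 2^m has such a representation with |A| = |B| + 1.
  2. Folding: if 2^r = 1 (mod k) and n <= r, then the set
     I = ({..<n} - B) union (r + A) has exactly n elements, lies in
     {..<r+n}, and its power sum is congruent to (2^n - 1) + t.
  3. Any residue class mod k contains a number 2^n - 1 + t with |t| < 2^m,
     since k <= 2^n - 1.  Taking r = totient k < k (Euler) gives n <= r and
     all indices below r + n <= n + k - 1, which yields the theorem.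
*)

definition pow2_sum :: "nat set \<Rightarrow> int" where
  "pow2_sum A = (\<Sum>i\<in>A. 2 ^ i)"

lemma pow2_sum_shift: "pow2_sum (Suc ` A) = 2 * pow2_sum A"
  by (simp add: pow2_sum_def sum.reindex sum_distrib_left)

lemma pow2_sum_shift_ins0:
  "finite A \<Longrightarrow> pow2_sum (insert 0 (Suc ` A)) = 1 + 2 * pow2_sum A"
  by (simp add: pow2_sum_def sum.reindex sum_distrib_left)

lemma card_shift_ins0: "finite A \<Longrightarrow> card (insert 0 (Suc ` A)) = Suc (card A)"
  by (simp add: card_image)

definition digit_rep :: "nat \<Rightarrow> nat \<Rightarrow> int \<Rightarrow> bool" where
  "digit_rep m c t \<longleftrightarrow> (\<exists>A B. A \<subseteq> {..m} \<and> B \<subseteq> {..m} \<and>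
      card A = card B + c \<and> pow2_sum A - pow2_sum B = t)"

lemma digit_rep_double: "digit_rep m c t \<Longrightarrow> digit_rep (Suc m) c (2 * t)"
  unfolding digit_rep_def
proof (elim exE conjE)
  fix A B assume "A \<subseteq> {..m}" "B \<subseteq> {..m}"
    "card A = card B + c" "pow2_sum A - pow2_sum B = t"
  then show "\<exists>A B. A \<subseteq> {..Suc m} \<and> B \<subseteq> {..Suc m} \<and>
      card A = card B + c \<and> pow2_sum A - pow2_sum B = 2 * t"
    by (intro exI[of _ "Suc ` A"] exI[of _ "Suc ` B"])
      (auto simp: card_image pow2_sum_shift)
qed

lemma digit_rep_odd_up: "digit_rep m 0 t \<Longrightarrow> digit_rep (Suc m) 1 (2 * t + 1)"
  unfolding digit_rep_def
proof (elim exE conjE)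
  fix A B assume AB: "A \<subseteq> {..m}" "B \<subseteq> {..m}"
    "card A = card B + 0" "pow2_sum A - pow2_sum B = t"
  then have "finite A" using finite_subset by blast
  with AB show "\<exists>A B. A \<subseteq> {..Suc m} \<and> B \<subseteq> {..Suc m} \<and>
      card A = card B + 1 \<and> pow2_sum A - pow2_sum B = 2 * t + 1"
    by (intro exI[of _ "insert 0 (Suc ` A)"] exI[of _ "Suc ` B"])
      (auto simp: card_image card_shift_ins0 pow2_sum_shift pow2_sum_shift_ins0)
qed

lemma digit_rep_odd_down: "digit_rep m 1 t \<Longrightarrow> digit_rep (Suc m) 0 (2 * t - 1)"
  unfolding digit_rep_def
proof (elim exE conjE)
  fix A B assume AB: "A \<subseteq> {..m}" "B \<subseteq> {..m}"
    "card A = card B + 1" "pow2_sum A - pow2_sum B = t"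
  then have "finite B" using finite_subset by blast
  with AB show "\<exists>A B. A \<subseteq> {..Suc m} \<and> B \<subseteq> {..Suc m} \<and>
      card A = card B + 0 \<and> pow2_sum A - pow2_sum B = 2 * t - 1"
    by (intro exI[of _ "Suc ` A"] exI[of _ "insert 0 (Suc ` B)"])
      (auto simp: card_image card_shift_ins0 pow2_sum_shift pow2_sum_shift_ins0)
qed

lemma digit_rep_neg: "digit_rep m 0 t \<Longrightarrow> digit_rep m 0 (- t)"
  unfolding digit_rep_def
proof (elim exE conjE)
  fix A B assume "A \<subseteq> {..m}" "B \<subseteq> {..m}" "card A = card B + 0"
    "pow2_sum A - pow2_sum B = t"
  then show "\<exists>A B. A \<subseteq> {..m} \<and> B \<subseteq> {..m} \<and>
      card A = card B + 0 \<and> pow2_sum A - pow2_sum B = - t"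
    by (intro exI[of _ B] exI[of _ A]) simp
qed

lemma digit_rep_exists:
  "(\<forall>t. \<bar>t\<bar> < 2 ^ m \<longrightarrow> digit_rep m 0 t) \<and> (\<forall>t. 0 < t \<and> t \<le> 2 ^ m \<longrightarrow> digit_rep m 1 t)"
proof (induction m)
  case 0
  have "digit_rep 0 0 0"
    unfolding digit_rep_def by (intro exI[of _ "{}"]) simp
  moreover have "digit_rep 0 1 1"
    unfolding digit_rep_def by (intro exI[of _ "{0}"] exI[of _ "{}"]) (simp add: pow2_sum_def)
  moreover have "t = 0" if "\<bar>t\<bar> < 2 ^ 0" for t :: int using that by simp
  moreover have "t = 1" if "0 < t \<and> t \<le> 2 ^ 0" for t :: int using that by simp
  ultimately show ?case by metis
next
  case (Suc m)
  have bal: "digit_rep m 0 u" if "\<bar>u\<bar> < 2 ^ m" for u using Suc that by blast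
  have sur: "digit_rep m 1 u" if "0 < u" "u \<le> 2 ^ m" for u using Suc that by blast
  have bal_nonneg: "digit_rep (Suc m) 0 t" if t: "0 \<le> t" "t < 2 ^ Suc m" for t
  proof (cases "even t")
    case True
    then obtain u where u: "t = 2 * u" by blast
    with t have "\<bar>u\<bar> < 2 ^ m" by simp
    from digit_rep_double[OF bal[OF this]] show ?thesis by (simp only: u)
  next
    case False
    define u where "u = (t + 1) div 2"
    have u: "t = 2 * u - 1" using False by (simp add: u_def) presburger
    with t have "0 < u" "u \<le> 2 ^ m" by simp_all
    from digit_rep_odd_down[OF sur[OF this]] show ?thesis by (simp only: u)
  qed
  have "digit_rep (Suc m) 0 t" if t: "\<bar>t\<bar> < 2 ^ Suc m" for t
  proof (cases "0 \<le> t")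
    case True
    with t show ?thesis by (intro bal_nonneg) simp_all
  next
    case False
    with t have "digit_rep (Suc m) 0 (- t)" by (intro bal_nonneg) simp_all
    from digit_rep_neg[OF this] show ?thesis by simp
  qed
  moreover have "digit_rep (Suc m) 1 t" if t: "0 < t" "t \<le> 2 ^ Suc m" for t
  proof (cases "even t")
    case True
    then obtain u where u: "t = 2 * u" by blast
    with t have "0 < u" "u \<le> 2 ^ m" by simp_all
    from digit_rep_double[OF sur[OF this]] show ?thesis by (simp only: u)
  next
    case False
    then obtain u where u: "t = 2 * u + 1" by (rule oddE)
    with t False have "\<bar>u\<bar> < 2 ^ m" by simp
    from digit_rep_odd_up[OF bal[OF this]] show ?thesis by (simp only: u)
  qed
  ultimately show ?case by blast
qed

text \<open>Folding a balanced signed representation into an ordinary one: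
  the negative digits B are removed from the full block {..<n}, and the
  positive digits A are moved up by a period r of 2 modulo K.\<close>

lemma fold_digits:
  fixes K :: int
  assumes A: "A \<subseteq> {..<n}" and B: "B \<subseteq> {..<n}" and card: "card A = card B"
    and "n \<le> r" and period: "[2 ^ r = 1] (mod K)"
  defines "I \<equiv> ({..<n} - B) \<union> (+) r ` A"
  shows "card I = n" and "I \<subseteq> {..<r + n}"
    and "[pow2_sum I = 2 ^ n - 1 + (pow2_sum A - pow2_sum B)] (mod K)"
proof -
  have fin: "finite A" "finite B" using A B finite_subset by auto
  have disj: "({..<n} - B) \<inter> (+) r ` A = {}" using \<open>n \<le> r\<close> by auto
  have "card ({..<n} - B) = n - card B" using B by (simp add: card_Diff_subset fin)
  moreover have "card B \<le> n" using card_mono[OF finite_lessThan B] by simp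
  ultimately show "card I = n"
    unfolding I_def using disj card by (simp add: card_Un_disjoint fin card_image)
  show "I \<subseteq> {..<r + n}" unfolding I_def using A by auto
  have block: "pow2_sum {..<n} = 2 ^ n - 1"
    unfolding pow2_sum_def by (induction n) auto
  have "pow2_sum I = pow2_sum ({..<n} - B) + pow2_sum ((+) r ` A)"
    unfolding I_def pow2_sum_def by (rule sum.union_disjoint) (use disj fin in auto)
  also have "\<dots> = (2 ^ n - 1 - pow2_sum B) + 2 ^ r * pow2_sum A"
    using B block by (simp add: pow2_sum_def sum_diff sum.reindex sum_distrib_left power_add)
  finally have "[pow2_sum I = (2 ^ n - 1 - pow2_sum B) + 2 ^ r * pow2_sum A] (mod K)"
    by (simp only: cong_refl)
  also have "[(2 ^ n - 1 - pow2_sum B) + 2 ^ r * pow2_sum A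
      = (2 ^ n - 1 - pow2_sum B) + 1 * pow2_sum A] (mod K)"
    by (intro cong_add cong_refl cong_scalar_right period)
  also have "(2 ^ n - 1 - pow2_sum B) + 1 * pow2_sum A = 2 ^ n - 1 + (pow2_sum A - pow2_sum B)"
    by simp
  finally show "[pow2_sum I = 2 ^ n - 1 + (pow2_sum A - pow2_sum B)] (mod K)" .
qed

lemma residue_window:
  fixes K x :: int
  assumes "0 < K" and "K < 2 ^ Suc m"
  shows "\<exists>t. \<bar>t\<bar> < 2 ^ m \<and> [2 ^ Suc m - 1 + t = x] (mod K)"
proof -
  define y where "y = 2 ^ m + (x - 2 ^ m) mod K"
  have "[y = x] (mod K)" unfolding y_def cong_def by (simp add: mod_add_right_eq)
  moreover have "2 ^ m \<le> y" "y < 2 ^ m + K" using assms(1) by (simp_all add: y_def)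
  ultimately show ?thesis using assms(2)
    by (intro exI[of _ "y - (2 ^ Suc m - 1)"]) auto
qed

lemma nk_bound: "k \<le> 2 ^ nk k"
proof -
  have "k \<le> 2 ^ k" using less_exp[of k] by simp
  then show ?thesis unfolding nk_def by (rule LeastI)
qed

lemma nk_least: "k \<le> 2 ^ r \<Longrightarrow> nk k \<le> r"
  unfolding nk_def by (rule Least_le)

lemma nk_pos: "1 < k \<Longrightarrow> 0 < nk k"
  using nk_bound[of k] by (cases "nk k") auto

text \<open>For odd k > 1 the Euler exponent r = totient k is a period of 2
  modulo k with nk k <= r < k.\<close>

lemma period_of_two:
  assumes "1 < k" and "odd k"
  shows "\<exists>r. nk k \<le> r \<and> r < k \<and> [2 ^ r = 1] (mod k)"
proof -
  define r where "r = totient k"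
  have period: "[2 ^ r = 1] (mod k)"
    unfolding r_def using assms(2) by (intro euler_theorem) simp
  have "0 < r" using assms(1) by (simp add: r_def)
  then have "0 < (2::nat) ^ r - 1" using one_less_power[of "2::nat" r] by simp
  moreover have "k dvd 2 ^ r - 1" using period by (simp add: cong_altdef_nat one_le_power)
  ultimately have "k \<le> 2 ^ r - 1" by (rule dvd_imp_le[rotated])
  then have "k \<le> 2 ^ r" by simp
  moreover have "r < k" using totient_less assms(1) by (simp add: r_def)
  ultimately show ?thesis using period nk_least by blast
qed

theorem mainTheorem1:
  fixes k :: nat and x :: nat
  assumes "k > 1" and "odd k" and "x < k"
  shows "\<exists>I :: nat set. I \<subseteq> {0..nk k + k - 2} \<and> card I = nk k \<and>
           [x = (\<Sum>i\<in>I. 2 ^ i)] (mod k)"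
proof -
  obtain r where r: "nk k \<le> r" "r < k" "[2 ^ r = 1] (mod k)"
    using period_of_two assms(1,2) by blast
  obtain m where m: "nk k = Suc m" using nk_pos[OF assms(1)] gr0_implies_Suc by blast
  have "k \<noteq> 2 ^ Suc m" using assms(2) by auto
  then have "k < 2 ^ Suc m" using nk_bound[of k] unfolding m by simp
  then have "int k < int (2 ^ Suc m)" by (simp only: of_nat_less_iff)
  then have "int k < 2 ^ Suc m" by simp
  then obtain t where t: "\<bar>t\<bar> < 2 ^ m" "[2 ^ Suc m - 1 + t = int x] (mod int k)"
    using residue_window[of "int k" m "int x"] assms(1) by auto
  have "digit_rep m 0 t" using digit_rep_exists[of m] t(1) by blast
  then obtain A B where AB: "A \<subseteq> {..<Suc m}" "B \<subseteq> {..<Suc m}" "card A = card B"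
      "pow2_sum A - pow2_sum B = t"
    unfolding digit_rep_def lessThan_Suc_atMost by auto
  have "[int (2 ^ r) = int 1] (mod int k)" using r(3) by (simp only: cong_int_iff)
  then have period: "[2 ^ r = (1::int)] (mod int k)" by simp
  define I where "I = ({..<Suc m} - B) \<union> (+) r ` A"
  have "Suc m \<le> r" using r(1) m by simp
  note I = fold_digits[OF AB(1-3) this period, folded I_def]
  have "[int x = pow2_sum I] (mod int k)"
    using cong_trans[OF I(3)[unfolded AB(4)] t(2)] by (rule cong_sym)
  then have "[int x = int (\<Sum>i\<in>I. 2 ^ i)] (mod int k)" by (simp add: pow2_sum_def)
  then have "[x = (\<Sum>i\<in>I. 2 ^ i)] (mod k)" by (simp only: cong_int_iff)
  moreover have "I \<subseteq> {0..nk k + k - 2}" using I(2) r(2) m by auto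
  moreover have "card I = nk k" using I(1) m by simp
  ultimately show ?thesis by blast
qed

end
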